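(* Let $A\in \mathrm{GL}_{2g}(\mathbb{Z})$ be a hyperbolic matrix, and let $E^{c},E^{e}\subset\mathbb{R}^{2g}$ be its contracting and expanding subspaces. Let $\Lambda^+,\Lambda^-\subseteq\mathbb{Z}^{2g}$ be sublattices of rank $g$ such that $(\Lambda^+\otimes\mathbb{R})\cap E^c=0$ and $(\Lambda^-\otimes\mathbb{R})\cap E^e=0$. For $N\geq 1$ put $\Lambda_N^{\pm}=A^{\pm N}\Lambda^{\pm}$. Then the cardinality of $\mathbb{Z}^{2g}/(\Lambda_N^+ + \Lambda_N^-)$ grows exponentially with $N$, i.e. there exist constants $C>0$ and $r>1$ such that $\#\big(\mathbb{Z}^{2g}/(\Lambda_N^++\Lambda_N^-)\big)\geq C r^N$ for all $N\geq 1$.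
   Context: A matrix $A\in\mathrm{GL}_{2g}(\mathbb{Z})$ is called hyperbolic if $\mathbb{R}^{2g}$ is the direct sum of a $g$-dimensional contracting subspace $E^c$, spanned by $g$ eigenvectors with eigenvalues of modulus less than $1$, and a complementary $g$-dimensional expanding subspace $E^e$, spanned by $g$ eigenvectors with eigenvalues of modulus greater than $1$. *)

theory Defs
  imports "HOL-Analysis.Analysis"
begin

primrec mpow :: "'a::semiring_1^'n^'n \<Rightarrow> nat \<Rightarrow> 'a^'n^'n" where
  "mpow A 0 = mat 1"
| "mpow A (Suc k) = A ** mpow A k"

definition realv :: "int^'n \<Rightarrow> real^'n" where
  "realv x = (\<chi> i. real_of_int (x $ i))"

definition realm :: "int^'n^'m \<Rightarrow> real^'n^'m" where
  "realm A = (\<chi> i j. real_of_int (A $ i $ j))"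

definition hyperbolic_decomp ::
    "int^'n^'n \<Rightarrow> nat \<Rightarrow> (real^'n) set \<Rightarrow> (real^'n) set \<Rightarrow> bool" where
  "hyperbolic_decomp A g Ec Ee \<longleftrightarrow>
     CARD('n) = 2 * g \<and>
     (\<exists>Bc. finite Bc \<and> card Bc = g \<and> independent Bc \<and> span Bc = Ec \<and>
        (\<forall>v\<in>Bc. \<exists>l::real. realm A *v v = l *\<^sub>R v \<and> \<bar>l\<bar> < 1)) \<and>
     (\<exists>Be. finite Be \<and> card Be = g \<and> independent Be \<and> span Be = Ee \<and>
        (\<forall>v\<in>Be. \<exists>l::real. realm A *v v = l *\<^sub>R v \<and> \<bar>l\<bar> > 1)) \<and>
     Ec \<inter> Ee = {0} \<and> {x + y | x y. x \<in> Ec \<and> y \<in> Ee} = UNIV"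

definition int_sublattice :: "(int^'n) set \<Rightarrow> bool" where
  "int_sublattice L \<longleftrightarrow> 0 \<in> L \<and> (\<forall>x\<in>L. \<forall>y\<in>L. x + y \<in> L) \<and> (\<forall>x\<in>L. - x \<in> L)"

definition lattice_tensor_R :: "(int^'n) set \<Rightarrow> (real^'n) set" where
  "lattice_tensor_R L = span (realv ` L)"

definition lattice_rank :: "(int^'n) set \<Rightarrow> nat" where
  "lattice_rank L = dim (lattice_tensor_R L)"

definition quotient_cosets :: "(int^'n) set \<Rightarrow> (int^'n) set set" where
  "quotient_cosets L = range (\<lambda>x. (\<lambda>l. x + l) ` L)"

end

theory Submission
  imports Defs
begin

(* Write h = A^N a + A^-N b with a in Lp, b in Lm, and measure vectors by the absolute values
  of their coordinates in an eigenbasis of A, split into contracting and expanding parts.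
  Since span Lp meets Ec trivially, the expanding coordinates of a are comparable to |a|, and
  A^N multiplies them by at least rho^N for some rho > 1, while A^-N does not enlarge the
  expanding coordinates of b; symmetrically for the contracting coordinates of A^-N b.
  Hence every nonzero h in Lp_N + Lm_N has norm at least k rho^N - 1, so the integer points
  j e_i with 0 <= j < k rho^N - 1 lie in pairwise distinct cosets. *)

lemma realv_add: "realv (x + y) = realv x + realv y"
  by (simp add: realv_def vec_eq_iff)

lemma realv_matrix_vector_mult: "realv (A *v x) = realm A *v realv x"
  by (simp add: realv_def realm_def matrix_vector_mult_def vec_eq_iff)

lemma realm_mpow: "realm (mpow A N) = mpow (realm A) N"
proof (induction N)
  case 0
  show ?case by (simp add: realm_def mat_def vec_eq_iff)
next
  case (Suc N)
  then show ?case by (simp add: realm_def matrix_matrix_mult_def vec_eq_iff)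
qed

lemma norm_realv_ge_1:
  assumes "x \<noteq> 0"
  shows "1 \<le> norm (realv x)"
proof -
  obtain i where "x $ i \<noteq> 0" using assms by (auto simp: vec_eq_iff)
  then have "1 \<le> \<bar>realv x $ i\<bar>" by (simp add: realv_def)
  also have "\<dots> \<le> norm (realv x)" by (rule component_le_norm_cart)
  finally show ?thesis .
qed

lemma norm_realv_axis: "norm (realv (axis i m)) = \<bar>real_of_int m\<bar>"
proof -
  have "realv (axis i m) = real_of_int m *\<^sub>R axis i 1"
    by (simp add: realv_def axis_def vec_eq_iff)
  then show ?thesis by simp
qed

lemma mpow_Suc_right: "mpow A (Suc N) = mpow A N ** A"
  by (induction N) (simp_all add: matrix_mul_assoc)

lemma mpow_mult_right_inverse:
  assumes "A ** A' = mat 1"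
  shows "mpow A N ** mpow A' N = mat 1"
proof (induction N)
  case (Suc N)
  have "mpow A (Suc N) ** mpow A' (Suc N) = mpow A N ** ((A ** A') ** mpow A' N)"
    unfolding mpow_Suc_right[of A] by (simp add: matrix_mul_assoc)
  then show ?case using Suc assms by simp
qed simp

lemma mpow_eigenvector:
  fixes M :: "real^'n^'n"
  assumes "M *v v = l *\<^sub>R v"
  shows "mpow M N *v v = l ^ N *\<^sub>R v"
  by (induction N)
    (simp_all add: matrix_vector_mul_assoc[symmetric] assms matrix_vector_mult_scaleR)

lemma representation_eigenbasis:
  fixes f :: "'a::real_vector \<Rightarrow> 'a"
  assumes B: "independent B" "span B = UNIV" and f: "linear f"
    and eigen: "\<And>b. b \<in> B \<Longrightarrow> f b = lam b *\<^sub>R b"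
  shows "representation B (f u) c = lam c * representation B u c"
proof -
  have rep_lin: "linear (\<lambda>v. representation B v c)"
    using B by (intro linearI)
      (simp_all add: real_vector.representation_add real_vector.representation_scale)
  have "linear (\<lambda>v. representation B (f v) c)"
    using linear_compose[OF f rep_lin] by (simp add: o_def)
  moreover have "linear (\<lambda>v. lam c * representation B v c)"
    by (intro linearI)
      (simp_all add: linear_add[OF rep_lin] linear_scale[OF rep_lin] algebra_simps)
  moreover have "representation B (f b) c = lam c * representation B b c" if "b \<in> B" for b
    using B that by (simp add: eigen real_vector.representation_scale
        real_vector.representation_basis real_vector.span_base)
  ultimately show ?thesis
    using B(2) real_vector.linear_eq_on_span[of "\<lambda>v. representation B (f v) c"
        "\<lambda>v. lam c * representation B v c" B u]
    by auto
qed

definition coord_seminorm :: "'a::real_vector set \<Rightarrow> 'a set \<Rightarrow> 'a \<Rightarrow> real" where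
  "coord_seminorm B S u = (\<Sum>b\<in>S. \<bar>representation B u b\<bar>)"

lemma coord_seminorm_nonneg: "0 \<le> coord_seminorm B S u"
  by (simp add: coord_seminorm_def sum_nonneg)

lemma coord_seminorm_diff_ineq:
  assumes "independent B" "span B = UNIV"
  shows "coord_seminorm B S u - coord_seminorm B S v \<le> coord_seminorm B S (u + v)"
proof -
  have "coord_seminorm B S u - coord_seminorm B S v
      = (\<Sum>b\<in>S. \<bar>representation B u b\<bar> - \<bar>representation B v b\<bar>)"
    by (simp add: coord_seminorm_def sum_subtractf)
  also have "\<dots> \<le> coord_seminorm B S (u + v)"
    using assms unfolding coord_seminorm_def
    by (intro sum_mono) (simp add: real_vector.representation_add)
  finally show ?thesis .
qed

lemma coord_seminorm_le_norm:
  fixes B :: "'a::euclidean_space set"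
  assumes "independent B" "span B = UNIV" "finite S"
  obtains K where "K > 0" "\<And>u. coord_seminorm B S u \<le> K * norm u"
proof -
  have "\<exists>K>0. \<forall>u. \<bar>representation B u b\<bar> \<le> norm u * K" for b
    using bounded_linear.pos_bounded[OF bounded_linear_representation[OF assms(1,2)]] by simp
  then obtain K where K: "\<And>b. K b > 0" "\<And>b u. \<bar>representation B u b\<bar> \<le> norm u * K b"
    by metis
  show ?thesis
  proof
    show "(\<Sum>b\<in>S. K b) + 1 > 0"
      using K(1) by (smt (verit) sum_nonneg)
    fix u
    have "coord_seminorm B S u \<le> (\<Sum>b\<in>S. K b) * norm u"
      unfolding coord_seminorm_def sum_distrib_right
      by (intro sum_mono) (metis K(2) mult.commute)
    also have "\<dots> \<le> ((\<Sum>b\<in>S. K b) + 1) * norm u"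
      by (simp add: mult_right_mono)
    finally show "coord_seminorm B S u \<le> ((\<Sum>b\<in>S. K b) + 1) * norm u" .
  qed
qed

lemma coord_seminorm_ge_norm:
  fixes B :: "'a::euclidean_space set"
  assumes B: "independent B" "span B = UNIV" "finite B" and "S \<subseteq> B"
    and P: "subspace P" "P \<inter> span (B - S) = {0}"
  obtains k where "k > 0" "\<And>u. u \<in> P \<Longrightarrow> k * norm u \<le> coord_seminorm B S u"
proof -
  \<comment> \<open>The component of u along S is a bounded linear map that is injective on P.\<close>
  define proj where "proj u = (\<Sum>b\<in>S. representation B u b *\<^sub>R b)" for u
  have "bounded_linear proj"
    unfolding proj_def using bounded_linear_representation[OF B(1,2)]
    by (intro bounded_linear_sum bounded_linear_scaleR_const) auto
  moreover have "u = 0" if "u \<in> P" "proj u = 0" for u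
  proof -
    have "u = (\<Sum>b\<in>B. representation B u b *\<^sub>R b)"
      using real_vector.sum_representation_eq[OF B(1), of u B] B by auto
    also have "\<dots> = (\<Sum>b\<in>B - S. representation B u b *\<^sub>R b) + proj u"
      unfolding proj_def using B(3) \<open>S \<subseteq> B\<close> by (metis sum.subset_diff)
    also have "\<dots> \<in> span (B - S)"
      using that(2) by simp
        (intro real_vector.span_sum real_vector.span_scale real_vector.span_base; simp)
    finally show "u = 0" using that(1) P(2) by blast
  qed
  ultimately obtain k where k: "k > 0" "\<And>u. u \<in> P \<Longrightarrow> k * norm u \<le> norm (proj u)"
    using injective_imp_isometric[OF closed_subspace[OF P(1)] P(1)] by blast
  define V where "V = (\<Sum>b\<in>B. norm b) + 1"
  have V: "V > 0" "\<And>b. b \<in> S \<Longrightarrow> norm b \<le> V"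
    using B(3) \<open>S \<subseteq> B\<close> unfolding V_def
    by (auto intro!: add_nonneg_pos sum_nonneg add_increasing2 member_le_sum)
  show ?thesis
  proof
    show "k / V > 0" using k(1) V(1) by simp
    fix u assume "u \<in> P"
    have "norm (proj u) \<le> (\<Sum>b\<in>S. \<bar>representation B u b\<bar> * V)"
      unfolding proj_def
      by (rule order_trans[OF norm_sum sum_mono]) (simp add: V(2) mult_left_mono)
    also have "\<dots> = V * coord_seminorm B S u"
      by (simp add: coord_seminorm_def sum_distrib_left mult.commute)
    finally show "k / V * norm u \<le> coord_seminorm B S u"
      using k(2)[OF \<open>u \<in> P\<close>] V(1) by (simp add: field_simps)
  qed
qed

locale hyperbolic_eigenbasis =
  fixes M :: "real^'n^'n" and Bc Be :: "(real^'n) set" and lam :: "real^'n \<Rightarrow> real"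
  assumes finite_basis: "finite (Bc \<union> Be)"
    and independent_basis: "independent (Bc \<union> Be)"
    and span_basis: "span (Bc \<union> Be) = UNIV"
    and disjoint_basis: "Bc \<inter> Be = {}"
    and eigenvector: "b \<in> Bc \<union> Be \<Longrightarrow> M *v b = lam b *\<^sub>R b"
    and contracting: "b \<in> Bc \<Longrightarrow> \<bar>lam b\<bar> < 1"
    and expanding: "b \<in> Be \<Longrightarrow> 1 < \<bar>lam b\<bar>"
begin

abbreviation contracting_seminorm :: "real^'n \<Rightarrow> real" where
  "contracting_seminorm \<equiv> coord_seminorm (Bc \<union> Be) Bc"

abbreviation expanding_seminorm :: "real^'n \<Rightarrow> real" where
  "expanding_seminorm \<equiv> coord_seminorm (Bc \<union> Be) Be"

lemma coord_seminorm_mpow: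
  "coord_seminorm (Bc \<union> Be) S (mpow M N *v u)
     = (\<Sum>b\<in>S. \<bar>lam b\<bar> ^ N * \<bar>representation (Bc \<union> Be) u b\<bar>)"
proof -
  have "representation (Bc \<union> Be) (mpow M N *v u) b
      = lam b ^ N * representation (Bc \<union> Be) u b" for b
    by (rule representation_eigenbasis[OF independent_basis span_basis])
      (auto simp: mpow_eigenvector eigenvector)
  then show ?thesis
    by (simp add: coord_seminorm_def abs_mult power_abs)
qed

lemma eigenvalue_gap:
  obtains \<rho> where "1 < \<rho>"
    "\<And>b. b \<in> Be \<Longrightarrow> \<rho> \<le> \<bar>lam b\<bar>" "\<And>b. b \<in> Bc \<Longrightarrow> \<rho> * \<bar>lam b\<bar> \<le> 1"
proof -
  have "\<forall>b\<in>Be. \<forall>\<^sub>F \<rho> in at_right 1. \<rho> < \<bar>lam b\<bar>"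
    using expanding by (auto intro: order_tendstoD(2)[OF tendsto_ident_at])
  moreover have "\<forall>b\<in>Bc. \<forall>\<^sub>F \<rho> in at_right 1. \<rho> * \<bar>lam b\<bar> < 1"
    using contracting
    by (auto intro: order_tendstoD(2)[OF tendsto_mult_right[OF tendsto_ident_at]])
  ultimately have "\<forall>\<^sub>F \<rho> in at_right 1.
      1 < \<rho> \<and> (\<forall>b\<in>Be. \<rho> < \<bar>lam b\<bar>) \<and> (\<forall>b\<in>Bc. \<rho> * \<bar>lam b\<bar> < 1)"
    using finite_basis
    by (intro eventually_conj eventually_at_right_less eventually_ball_finite) auto
  then obtain \<rho> where "1 < \<rho>" "\<forall>b\<in>Be. \<rho> < \<bar>lam b\<bar>" "\<forall>b\<in>Bc. \<rho> * \<bar>lam b\<bar> < 1"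
    using eventually_happens'[OF trivial_limit_at_right_real] by blast
  then show ?thesis
    by (intro that) auto
qed

lemma hyperbolic_growth:
  obtains \<rho> where "1 < \<rho>"
    "\<And>N u. \<rho> ^ N * expanding_seminorm u \<le> expanding_seminorm (mpow M N *v u)"
    "\<And>N u. \<rho> ^ N * contracting_seminorm (mpow M N *v u) \<le> contracting_seminorm u"
proof -
  obtain \<rho> where \<rho>: "1 < \<rho>"
    "\<And>b. b \<in> Be \<Longrightarrow> \<rho> \<le> \<bar>lam b\<bar>" "\<And>b. b \<in> Bc \<Longrightarrow> \<rho> * \<bar>lam b\<bar> \<le> 1"
    using eigenvalue_gap by blast
  show ?thesis
  proof (rule that[OF \<rho>(1)])
    fix N u
    show "\<rho> ^ N * expanding_seminorm u \<le> expanding_seminorm (mpow M N *v u)"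
      unfolding coord_seminorm_mpow unfolding coord_seminorm_def sum_distrib_left
      using \<rho> by (intro sum_mono mult_right_mono power_mono) auto
    have "\<rho> ^ N * contracting_seminorm (mpow M N *v u)
        = (\<Sum>b\<in>Bc. (\<rho> * \<bar>lam b\<bar>) ^ N * \<bar>representation (Bc \<union> Be) u b\<bar>)"
      unfolding coord_seminorm_mpow by (simp add: sum_distrib_left power_mult_distrib mult.assoc)
    also have "\<dots> \<le> contracting_seminorm u"
      unfolding coord_seminorm_def using \<rho>
      by (intro sum_mono mult_left_le_one_le power_le_one) auto
    finally show "\<rho> ^ N * contracting_seminorm (mpow M N *v u) \<le> contracting_seminorm u" .
  qed
qed

lemma seminorms_le_norm:
  obtains K where "0 < K" "\<And>u. contracting_seminorm u + expanding_seminorm u \<le> K * norm u"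
proof -
  obtain K where "0 < K" and K: "\<And>u. coord_seminorm (Bc \<union> Be) (Bc \<union> Be) u \<le> K * norm u"
    using coord_seminorm_le_norm[OF independent_basis span_basis finite_basis] by blast
  moreover have "coord_seminorm (Bc \<union> Be) (Bc \<union> Be) u
      = contracting_seminorm u + expanding_seminorm u" for u
    unfolding coord_seminorm_def using finite_basis disjoint_basis
    by (simp add: sum.union_disjoint)
  ultimately show ?thesis
    using that by metis
qed

lemma seminorms_ge_norm:
  assumes P: "subspace P" "P \<inter> span Bc = {0}" and Q: "subspace Q" "Q \<inter> span Be = {0}"
  obtains k where "0 < k"
    "\<And>u. u \<in> P \<Longrightarrow> k * norm u \<le> expanding_seminorm u"
    "\<And>u. u \<in> Q \<Longrightarrow> k * norm u \<le> contracting_seminorm u"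
proof -
  note basis = independent_basis span_basis finite_basis
  have "(Bc \<union> Be) - Be = Bc" "(Bc \<union> Be) - Bc = Be"
    using disjoint_basis by auto
  then obtain kP kQ where
    kP: "0 < kP" "\<And>u. u \<in> P \<Longrightarrow> kP * norm u \<le> expanding_seminorm u" and
    kQ: "0 < kQ" "\<And>u. u \<in> Q \<Longrightarrow> kQ * norm u \<le> contracting_seminorm u"
    using coord_seminorm_ge_norm[OF basis _ P(1), of Be] P(2)
      coord_seminorm_ge_norm[OF basis _ Q(1), of Bc] Q(2)
    by (metis sup_ge1 sup_ge2)
  show ?thesis
  proof (rule that[of "min kP kQ"])
    show "0 < min kP kQ"
      using kP(1) kQ(1) by simp
    show "min kP kQ * norm u \<le> expanding_seminorm u" if "u \<in> P" for u
      using kP(2)[OF that] by (smt (verit) mult_right_mono norm_ge_zero)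
    show "min kP kQ * norm u \<le> contracting_seminorm u" if "u \<in> Q" for u
      using kQ(2)[OF that] by (smt (verit) mult_right_mono norm_ge_zero)
  qed
qed

lemma norm_mpow_add_ge:
  assumes "subspace P" "P \<inter> span Bc = {0}" "subspace Q" "Q \<inter> span Be = {0}"
  obtains k \<rho> where "0 < k" "1 < \<rho>"
    "\<And>N a b y. a \<in> P \<Longrightarrow> b \<in> Q \<Longrightarrow> mpow M N *v y = b \<Longrightarrow>
       (k * \<rho> ^ N - 1) * (norm a + norm b) \<le> norm (mpow M N *v a + y)"
proof -
  obtain \<rho> where "1 < \<rho>"
    and expand: "\<And>N u. \<rho> ^ N * expanding_seminorm u \<le> expanding_seminorm (mpow M N *v u)"
    and contract: "\<And>N u. \<rho> ^ N * contracting_seminorm (mpow M N *v u) \<le> contracting_seminorm u"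
    using hyperbolic_growth by blast
  obtain K where "0 < K"
    and K: "\<And>u. contracting_seminorm u + expanding_seminorm u \<le> K * norm u"
    using seminorms_le_norm by blast
  obtain k where "0 < k"
    and kP: "\<And>u. u \<in> P \<Longrightarrow> k * norm u \<le> expanding_seminorm u"
    and kQ: "\<And>u. u \<in> Q \<Longrightarrow> k * norm u \<le> contracting_seminorm u"
    using seminorms_ge_norm[OF assms] by blast
  show ?thesis
  proof (rule that[of "k / K" \<rho>])
    show "0 < k / K"
      using \<open>0 < k\<close> \<open>0 < K\<close> by simp
    show "1 < \<rho>"
      by fact
    fix N a b y
    assume "a \<in> P" "b \<in> Q" and y: "mpow M N *v y = b"
    define t where "t = \<rho> ^ N"
    have "1 \<le> t"
      using \<open>1 < \<rho>\<close> by (simp add: t_def)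
    let ?x = "mpow M N *v a + y"
    have "expanding_seminorm (mpow M N *v a) - expanding_seminorm y \<le> expanding_seminorm ?x"
      by (rule coord_seminorm_diff_ineq[OF independent_basis span_basis])
    moreover have "contracting_seminorm y - contracting_seminorm (mpow M N *v a)
        \<le> contracting_seminorm ?x"
      using coord_seminorm_diff_ineq[OF independent_basis span_basis, of Bc y "mpow M N *v a"]
      by (metis add.commute)
    moreover have "t * (k * norm a) \<le> expanding_seminorm (mpow M N *v a)"
      using expand[of N a] kP[OF \<open>a \<in> P\<close>] \<open>1 \<le> t\<close> unfolding t_def
      by (smt (verit) mult_left_mono)
    moreover have "t * (k * norm b) \<le> contracting_seminorm y"
      using contract[of N y] kQ[OF \<open>b \<in> Q\<close>] \<open>1 \<le> t\<close> unfolding t_def y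
      by (smt (verit) mult_left_mono)
    moreover have "expanding_seminorm y \<le> expanding_seminorm b"
      using expand[of N y] mult_right_mono[OF \<open>1 \<le> t\<close> coord_seminorm_nonneg]
      unfolding t_def y by (smt (verit))
    moreover have "contracting_seminorm (mpow M N *v a) \<le> contracting_seminorm a"
      using contract[of N a] mult_right_mono[OF \<open>1 \<le> t\<close> coord_seminorm_nonneg]
      unfolding t_def by (smt (verit))
    ultimately have "(k * t - K) * (norm a + norm b) \<le> K * norm ?x"
      using K[of ?x] K[of a] K[of b] coord_seminorm_nonneg[of "Bc \<union> Be" Be a]
        coord_seminorm_nonneg[of "Bc \<union> Be" Bc b]
      by (simp add: algebra_simps)
    then show "(k / K * \<rho> ^ N - 1) * (norm a + norm b) \<le> norm ?x"
      using \<open>0 < K\<close> by (simp add: t_def field_simps)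
  qed
qed

end

lemma hyperbolic_decomp_eigenbasis:
  fixes A :: "int^'n^'n"
  assumes "hyperbolic_decomp A g Ec Ee"
  obtains Bc Be lam where "hyperbolic_eigenbasis (realm A) Bc Be lam" "span Bc = Ec" "span Be = Ee"
proof -
  obtain Bc Be where dim: "CARD('n) = 2 * g"
    and Bc: "finite Bc" "card Bc = g" "independent Bc" "span Bc = Ec"
      "\<forall>v\<in>Bc. \<exists>l. realm A *v v = l *\<^sub>R v \<and> \<bar>l\<bar> < 1"
    and Be: "finite Be" "card Be = g" "independent Be" "span Be = Ee"
      "\<forall>v\<in>Be. \<exists>l. realm A *v v = l *\<^sub>R v \<and> 1 < \<bar>l\<bar>"
    and trans: "Ec \<inter> Ee = {0}" and sum: "{x + y | x y. x \<in> Ec \<and> y \<in> Ee} = UNIV"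
    using assms unfolding hyperbolic_decomp_def by (elim conjE exE) (rule that; assumption)
  have span: "span (Bc \<union> Be) = UNIV"
  proof -
    have "x \<in> span (Bc \<union> Be)" for x
    proof -
      have "x \<in> {y + z | y z. y \<in> Ec \<and> z \<in> Ee}"
        using sum by simp
      then obtain y z where "x = y + z" "y \<in> span Bc" "z \<in> span Be"
        using Bc(4) Be(4) by blast
      moreover have "span Bc \<subseteq> span (Bc \<union> Be)" "span Be \<subseteq> span (Bc \<union> Be)"
        by (simp_all add: real_vector.span_mono)
      ultimately show ?thesis
        by (auto intro: real_vector.span_add)
    qed
    then show ?thesis by auto
  qed
  have disjoint: "Bc \<inter> Be = {}"
  proof -
    have "Bc \<inter> Be \<subseteq> Ec \<inter> Ee"
      unfolding Bc(4)[symmetric] Be(4)[symmetric] by (auto intro: real_vector.span_base)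
    then show ?thesis
      using trans Bc(3) real_vector.dependent_zero by auto
  qed
  have independent: "independent (Bc \<union> Be)"
    using dim Bc(1,2) Be(1,2) span card_Un_le[of Bc Be]
    by (intro eucl.card_le_dim_spanning[of _ UNIV]) auto
  have "\<forall>v\<in>Bc \<union> Be. \<exists>l. realm A *v v = l *\<^sub>R v
      \<and> (v \<in> Bc \<longrightarrow> \<bar>l\<bar> < 1) \<and> (v \<in> Be \<longrightarrow> 1 < \<bar>l\<bar>)"
    using Bc(5) Be(5) disjoint by blast
  then obtain lam where "\<forall>v\<in>Bc \<union> Be. realm A *v v = lam v *\<^sub>R v
      \<and> (v \<in> Bc \<longrightarrow> \<bar>lam v\<bar> < 1) \<and> (v \<in> Be \<longrightarrow> 1 < \<bar>lam v\<bar>)"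
    by metis
  with Bc(1) Be(1) disjoint span independent have "hyperbolic_eigenbasis (realm A) Bc Be lam"
    by unfold_locales auto
  then show ?thesis
    using that Bc(4) Be(4) by blast
qed

lemma card_quotient_cosets_ge:
  fixes H :: "(int^'n) set"
  assumes "0 \<in> H" "finite (quotient_cosets H)"
    and min_norm: "\<And>h. h \<in> H \<Longrightarrow> h \<noteq> 0 \<Longrightarrow> D \<le> norm (realv h)"
  shows "max 1 D \<le> card (quotient_cosets H)"
proof -
  fix i :: 'n
  define coset where "coset j = (\<lambda>l. axis i (int j) + l) ` H" for j
  have inj: "inj_on coset {..<nat \<lceil>D\<rceil>}"
  proof (rule inj_onI)
    fix j1 j2
    assume j: "j1 \<in> {..<nat \<lceil>D\<rceil>}" "j2 \<in> {..<nat \<lceil>D\<rceil>}" and "coset j1 = coset j2"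
    moreover have "axis i (int j1) \<in> coset j1"
      using \<open>0 \<in> H\<close> unfolding coset_def by force
    ultimately obtain h where "h \<in> H" and h: "axis i (int j1) = axis i (int j2) + h"
      unfolding coset_def by auto
    have "h = axis i (int j1) - axis i (int j2)"
      using h by simp
    also have "\<dots> = axis i (int j1 - int j2)"
      by (simp add: axis_def vec_eq_iff)
    finally have diff: "axis i (int j1 - int j2) \<in> H"
      using \<open>h \<in> H\<close> by simp
    have "real j < D" if "j < nat \<lceil>D\<rceil>" for j
      using that less_ceiling_iff[of "int j" D] by (simp add: zless_nat_eq_int_zless)
    then have close: "\<bar>real j1 - real j2\<bar> < D"
      using j by (smt (verit) lessThan_iff of_nat_0_le_iff)
    show "j1 = j2"
    proof (rule ccontr)
      assume "j1 \<noteq> j2"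
      then have "D \<le> \<bar>real j1 - real j2\<bar>"
        using min_norm[OF diff] by (simp add: norm_realv_axis)
      with close show False by simp
    qed
  qed
  have "coset ` {..<nat \<lceil>D\<rceil>} \<subseteq> quotient_cosets H"
    unfolding quotient_cosets_def coset_def by auto
  then have "card (coset ` {..<nat \<lceil>D\<rceil>}) \<le> card (quotient_cosets H)"
    by (rule card_mono[OF assms(2)])
  then have "nat \<lceil>D\<rceil> \<le> card (quotient_cosets H)"
    by (simp add: card_image[OF inj])
  moreover have "quotient_cosets H \<noteq> {}"
    by (simp add: quotient_cosets_def)
  then have "1 \<le> card (quotient_cosets H)"
    using assms(2) by (simp add: Suc_le_eq card_gt_0_iff)
  ultimately show ?thesis
    by linarith
qed

lemma lattice_sum_norm_growth:
  fixes A :: "int^'n^'n"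
  assumes "invertible A" "hyperbolic_decomp A g Ec Ee"
    and "lattice_tensor_R Lp \<inter> Ec = {0}" "lattice_tensor_R Lm \<inter> Ee = {0}"
  obtains k \<rho> where "0 < k" "1 < \<rho>"
    "\<And>N h. h \<in> {x + y | x y. x \<in> (\<lambda>x. mpow A N *v x) ` Lp
                               \<and> y \<in> (\<lambda>x. mpow (matrix_inv A) N *v x) ` Lm} \<Longrightarrow>
       h \<noteq> 0 \<Longrightarrow> k * \<rho> ^ N - 1 \<le> norm (realv h)"
proof -
  obtain Bc Be lam where eigenbasis: "hyperbolic_eigenbasis (realm A) Bc Be lam"
    and "span Bc = Ec" "span Be = Ee"
    using hyperbolic_decomp_eigenbasis[OF assms(2)] by blast
  interpret hyperbolic_eigenbasis "realm A" Bc Be lam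
    by (fact eigenbasis)
  obtain k \<rho> where k: "0 < k" and \<rho>: "1 < \<rho>"
    and bound: "\<And>N a b y. a \<in> lattice_tensor_R Lp \<Longrightarrow> b \<in> lattice_tensor_R Lm \<Longrightarrow>
      mpow (realm A) N *v y = b \<Longrightarrow>
      (k * \<rho> ^ N - 1) * (norm a + norm b) \<le> norm (mpow (realm A) N *v a + y)"
    using norm_mpow_add_ge[of "lattice_tensor_R Lp" "lattice_tensor_R Lm"] assms(3,4)
      \<open>span Bc = Ec\<close> \<open>span Be = Ee\<close>
    unfolding lattice_tensor_R_def by auto
  have "A ** matrix_inv A = mat 1 \<and> matrix_inv A ** A = mat 1"
    using assms(1) unfolding invertible_def matrix_inv_def by (rule someI_ex)
  then have inverse: "mpow A N ** mpow (matrix_inv A) N = mat 1" for N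
    by (simp add: mpow_mult_right_inverse)
  show ?thesis
  proof (rule that[OF k \<rho>])
    fix N h
    assume "h \<in> {x + y | x y. x \<in> (\<lambda>x. mpow A N *v x) ` Lp
                               \<and> y \<in> (\<lambda>x. mpow (matrix_inv A) N *v x) ` Lm}" and "h \<noteq> 0"
    then obtain a b where "a \<in> Lp" "b \<in> Lm"
      and h: "h = mpow A N *v a + mpow (matrix_inv A) N *v b"
      by blast
    have "mpow (realm A) N *v realv (mpow (matrix_inv A) N *v b) = realv b"
      by (simp add: realv_matrix_vector_mult[symmetric] realm_mpow[symmetric]
          matrix_vector_mul_assoc inverse)
    then have "(k * \<rho> ^ N - 1) * (norm (realv a) + norm (realv b)) \<le> norm (realv h)"
      using bound[of "realv a" "realv b" N] \<open>a \<in> Lp\<close> \<open>b \<in> Lm\<close>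
      by (simp add: h realv_add realv_matrix_vector_mult realm_mpow lattice_tensor_R_def
          real_vector.span_base)
    moreover have "a \<noteq> 0 \<or> b \<noteq> 0"
      using \<open>h \<noteq> 0\<close> h by auto
    then have "1 \<le> norm (realv a) + norm (realv b)"
      using norm_realv_ge_1 by (metis add_increasing add_increasing2 norm_ge_zero)
    ultimately show "k * \<rho> ^ N - 1 \<le> norm (realv h)"
      by (smt (verit) mult_le_cancel_left1 norm_ge_zero)
  qed
qed

theorem lemma2p1:
  fixes A :: "int^'n^'n" and g :: nat
    and Ec Ee :: "(real^'n) set"
    and Lp Lm :: "(int^'n) set"
  assumes "invertible A"
    and "hyperbolic_decomp A g Ec Ee"
    and "int_sublattice Lp" and "lattice_rank Lp = g"
    and "int_sublattice Lm" and "lattice_rank Lm = g"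
    and "lattice_tensor_R Lp \<inter> Ec = {0}"
    and "lattice_tensor_R Lm \<inter> Ee = {0}"
  shows "\<exists>C::real. C > 0 \<and> (\<exists>r::real. r > 1 \<and>
           (\<forall>N::nat. N \<ge> 1 \<longrightarrow>
              (let LpN = (\<lambda>x. mpow A N *v x) ` Lp;
                   LmN = (\<lambda>x. mpow (matrix_inv A) N *v x) ` Lm;
                   Q = quotient_cosets {x + y | x y. x \<in> LpN \<and> y \<in> LmN}
               in infinite Q \<or> C * r ^ N \<le> real (card Q))))"
proof -
  define H where "H N = {x + y | x y. x \<in> (\<lambda>x. mpow A N *v x) ` Lp
                                   \<and> y \<in> (\<lambda>x. mpow (matrix_inv A) N *v x) ` Lm}" for N
  obtain k \<rho> where "0 < k" "1 < \<rho>"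
    and growth: "\<And>N h. h \<in> H N \<Longrightarrow> h \<noteq> 0 \<Longrightarrow> k * \<rho> ^ N - 1 \<le> norm (realv h)"
    using lattice_sum_norm_growth[OF assms(1,2,7,8)] unfolding H_def by blast
  have zero: "0 \<in> H N" for N
  proof -
    have "0 \<in> Lp" "0 \<in> Lm"
      using assms(3,5) unfolding int_sublattice_def by blast+
    then have "mpow A N *v 0 + mpow (matrix_inv A) N *v 0 \<in> H N"
      unfolding H_def by blast
    then show ?thesis
      by simp
  qed
  have "k / 2 * \<rho> ^ N \<le> max 1 (k * \<rho> ^ N - 1)" for N
    by (simp add: max_def)
  then have "k / 2 * \<rho> ^ N \<le> card (quotient_cosets (H N))"
    if "finite (quotient_cosets (H N))" for N
    using card_quotient_cosets_ge[OF zero that growth] by (meson order_trans)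
  then show ?thesis
    using \<open>0 < k\<close> \<open>1 < \<rho>\<close> unfolding Let_def H_def
    by (intro exI[of _ "k / 2"] conjI exI[of _ \<rho>]) auto
qed

end
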